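(* Let $L$ be a distributive lattice (not necessarily bounded), let $n\ge 1$, and for each $i\in[n]=\{1,\dots,n\}$ let $a_i,b_i\in L$ with $a_i<b_i$. For $I\subseteq[n]$ let $\widehat{\mathbf e}_I\in L^n$ be the tuple whose $i$-th component is $b_i$ if $i\in I$ and $a_i$ if $i\notin I$, and let $D=\{\widehat{\mathbf e}_I : I\subseteq[n]\}$. Let $f\colon D\to L$. Then there exists a lattice polynomial function $p\colon L^n\to L$ with $p|_D=f$ if and only if $f$ is monotone and satisfies $$f(\widehat{\mathbf e}_{I\cup\{k\}})\wedge a_k\le f(\widehat{\mathbf e}_I)\le f(\widehat{\mathbf e}_{I\setminus\{k\}})\vee b_k\quad\text{for all } I\subseteq[n],\ k\in[n].\qquad(\star)$$ In this case, a polynomial function $p$ over $L$ satisfies $p|_D=f$ if and only if $c_I^-\le c_I\le c_I^+$ for all $I\subseteq[n]$, where $c_I$ are the coefficients of the (monotone) DNF of $p$ and $c_I^-,c_I^+$ are as defined in the context. In particular, one such $p$ is the polynomial function $p_0$ given by $$p_0(\mathbf x)=\bigvee_{I\subseteq[n]}\Bigl(f(\widehat{\mathbf e}_I)\wedge\bigwedge_{i\in I}x_i\Bigr).$$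
   Context: A lattice polynomial function on $L$ is a function $L^n\to L$ obtainable as a composition of $\wedge$, $\vee$, projections and constants from $L$. Let $0$ and $1$ denote the least and greatest elements of $L$ if they exist, and otherwise external elements adjoined below and above $L$. Every polynomial function $p$ over $L$ has a unique representation in disjunctive normal form (DNF) $p(\mathbf x)=\bigvee_{I\subseteq[n]}(c_I\wedge\bigwedge_{i\in I}x_i)$ with coefficients $c_I\in L\cup\{0,1\}$ that are monotone ($I\subseteq J\Rightarrow c_I\le c_J$), $c_\emptyset\neq 1$, $c_{[n]}\neq 0$; these are "the coefficients of the DNF of $p$". Embed $L$ into the Boolean algebra $B$ generated by $L$ (Birkhoff–Priestley), with bounds $0,1$ (coinciding with those of $L$ if $L$ is bounded) and complement $x\mapsto x'$. For $I\subseteq[n]$ define in $B$: $c_I^-=f(\widehat{\mathbf e}_I)\wedge\bigwedge_{i\notin I}a_i'$ and $c_I^+=f(\widehat{\mathbf e}_I)\vee\bigvee_{i\in I}b_i'$. $f$ monotone means $I\subseteq J\Rightarrow f(\widehat{\mathbf e}_I)\le f(\widehat{\mathbf e}_J)$. *)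

theory Defs
  imports Main
begin

unbundle lattice_syntax

text \<open>Indices: [n] = {1..n}; tuples in L^n are functions nat => 'a (only indices in {1..n} matter).\<close>

inductive lat_poly :: "nat \<Rightarrow> ((nat \<Rightarrow> 'a::distrib_lattice) \<Rightarrow> 'a) \<Rightarrow> bool" for n :: nat where
  proj:  "i \<in> {1..n} \<Longrightarrow> lat_poly n (\<lambda>x. x i)"
| const: "lat_poly n (\<lambda>x. c)"
| meet:  "lat_poly n p \<Longrightarrow> lat_poly n q \<Longrightarrow> lat_poly n (\<lambda>x. p x \<sqinter> q x)"
| join:  "lat_poly n p \<Longrightarrow> lat_poly n q \<Longrightarrow> lat_poly n (\<lambda>x. p x \<squnion> q x)"

definition ehat :: "(nat \<Rightarrow> 'a) \<Rightarrow> (nat \<Rightarrow> 'a) \<Rightarrow> nat set \<Rightarrow> nat \<Rightarrow> 'a" where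
  "ehat a b I = (\<lambda>i. if i \<in> I then b i else a i)"

definition monotone_on_D :: "nat \<Rightarrow> (nat \<Rightarrow> 'a::order) \<Rightarrow> (nat \<Rightarrow> 'a) \<Rightarrow> ((nat \<Rightarrow> 'a) \<Rightarrow> 'a) \<Rightarrow> bool" where
  "monotone_on_D n a b f \<longleftrightarrow>
     (\<forall>I J. I \<subseteq> J \<and> J \<subseteq> {1..n} \<longrightarrow> f (ehat a b I) \<le> f (ehat a b J))"

definition star_cond :: "nat \<Rightarrow> (nat \<Rightarrow> 'a::lattice) \<Rightarrow> (nat \<Rightarrow> 'a) \<Rightarrow> ((nat \<Rightarrow> 'a) \<Rightarrow> 'a) \<Rightarrow> bool" where
  "star_cond n a b f \<longleftrightarrow>
     (\<forall>I k. I \<subseteq> {1..n} \<and> k \<in> {1..n} \<longrightarrow>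
        f (ehat a b (I \<union> {k})) \<sqinter> a k \<le> f (ehat a b I) \<and>
        f (ehat a b I) \<le> f (ehat a b (I - {k})) \<squnion> b k)"

definition bmeet :: "'i set \<Rightarrow> ('i \<Rightarrow> 'b::boolean_algebra) \<Rightarrow> 'b" where
  "bmeet S g = Inf_fin (insert top (g ` S))"

definition bjoin :: "'i set \<Rightarrow> ('i \<Rightarrow> 'b::boolean_algebra) \<Rightarrow> 'b" where
  "bjoin S g = Sup_fin (insert bot (g ` S))"

inductive_set bgen :: "('a \<Rightarrow> 'b::boolean_algebra) \<Rightarrow> 'b set" for h where
  img: "h x \<in> bgen h"
| bot: "bot \<in> bgen h"
| top: "top \<in> bgen h"
| inf: "u \<in> bgen h \<Longrightarrow> v \<in> bgen h \<Longrightarrow> u \<sqinter> v \<in> bgen h"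
| sup: "u \<in> bgen h \<Longrightarrow> v \<in> bgen h \<Longrightarrow> u \<squnion> v \<in> bgen h"
| compl: "u \<in> bgen h \<Longrightarrow> - u \<in> bgen h"

definition bool_envelope :: "('a::distrib_lattice \<Rightarrow> 'b::boolean_algebra) \<Rightarrow> bool" where
  "bool_envelope h \<longleftrightarrow> inj h \<and>
     (\<forall>x y. h (x \<sqinter> y) = h x \<sqinter> h y) \<and> (\<forall>x y. h (x \<squnion> y) = h x \<squnion> h y) \<and>
     bgen h = UNIV \<and>
     (\<forall>x. (\<forall>y. x \<le> y) \<longrightarrow> h x = bot) \<and>
     (\<forall>x. (\<forall>y. y \<le> x) \<longrightarrow> h x = top)"

text \<open>c is the coefficient family of the (monotone) DNF of p, with L \<union> {0,1}
  identified with h(L) \<union> {bot, top} inside B.\<close>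
definition dnf_coeffs :: "nat \<Rightarrow> ('a::distrib_lattice \<Rightarrow> 'b::boolean_algebra) \<Rightarrow>
    ((nat \<Rightarrow> 'a) \<Rightarrow> 'a) \<Rightarrow> (nat set \<Rightarrow> 'b) \<Rightarrow> bool" where
  "dnf_coeffs n h p c \<longleftrightarrow>
     (\<forall>I. I \<subseteq> {1..n} \<longrightarrow> c I \<in> range h \<union> {bot, top}) \<and>
     (\<forall>I J. I \<subseteq> J \<and> J \<subseteq> {1..n} \<longrightarrow> c I \<le> c J) \<and>
     c {} \<noteq> top \<and> c {1..n} \<noteq> bot \<and>
     (\<forall>x. h (p x) = bjoin (Pow {1..n}) (\<lambda>I. c I \<sqinter> bmeet I (\<lambda>i. h (x i))))"

definition c_minus :: "nat \<Rightarrow> ('a \<Rightarrow> 'b::boolean_algebra) \<Rightarrow> (nat \<Rightarrow> 'a) \<Rightarrow> (nat \<Rightarrow> 'a) \<Rightarrow>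
    ((nat \<Rightarrow> 'a) \<Rightarrow> 'a) \<Rightarrow> nat set \<Rightarrow> 'b" where
  "c_minus n h a b f I = h (f (ehat a b I)) \<sqinter> bmeet ({1..n} - I) (\<lambda>i. - h (a i))"

definition c_plus :: "('a \<Rightarrow> 'b::boolean_algebra) \<Rightarrow> (nat \<Rightarrow> 'a) \<Rightarrow> (nat \<Rightarrow> 'a) \<Rightarrow>
    ((nat \<Rightarrow> 'a) \<Rightarrow> 'a) \<Rightarrow> nat set \<Rightarrow> 'b" where
  "c_plus h a b f I = h (f (ehat a b I)) \<squnion> bjoin I (\<lambda>i. - h (b i))"

definition p0 :: "nat \<Rightarrow> (nat \<Rightarrow> 'a::distrib_lattice) \<Rightarrow> (nat \<Rightarrow> 'a) \<Rightarrow> ((nat \<Rightarrow> 'a) \<Rightarrow> 'a) \<Rightarrow>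
    (nat \<Rightarrow> 'a) \<Rightarrow> 'a" where
  "p0 n a b f x = Sup_fin ((\<lambda>I. if I = {} then f (ehat a b I)
                                  else f (ehat a b I) \<sqinter> Inf_fin (x ` I)) ` Pow {1..n})"

end

(*
  Everything is tested against prime filters: in a distributive lattice x \<le> y holds iff every
  prime filter containing x contains y (Stone), and h embeds L into B compatibly with this.
  Read through a prime filter, a\<^sub>i \<le> b\<^sub>i and f become truth values A i \<longrightarrow> B i and a
  monotone predicate F on subsets of [n]; condition (\<star>) then says exactly that F(J) only depends
  on the coordinates where \<^bold>e\<^sub>J genuinely switches (B i \<and> \<not> A i). On such two-valued data both
  the interpolation by p\<^sub>0 and the coefficient bounds c\<^sub>I\<^sup>- \<le> c\<^sub>I \<le> c\<^sub>I\<^sup>+ reduce to elementary set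
  combinatorics. Conversely, monotonicity and (\<star>) hold for every polynomial function, by induction
  on its construction.
*)
theory Submission
  imports Defs
begin

definition lattice_filter :: "'a::lattice set \<Rightarrow> bool" where
  "lattice_filter F \<longleftrightarrow> (\<forall>x y. x \<sqinter> y \<in> F \<longleftrightarrow> x \<in> F \<and> y \<in> F)"

text \<open>The empty set and the whole carrier count as prime filters here; properness is only needed
  in Boolean algebras, where complements must be decided.\<close>
definition prime_filter :: "'a::lattice set \<Rightarrow> bool" where
  "prime_filter F \<longleftrightarrow> lattice_filter F \<and> (\<forall>x y. x \<squnion> y \<in> F \<longleftrightarrow> x \<in> F \<or> y \<in> F)"

definition proper_prime_filter :: "'a::bounded_lattice set \<Rightarrow> bool" where
  "proper_prime_filter F \<longleftrightarrow> prime_filter F \<and> top \<in> F \<and> bot \<notin> F"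

lemma lattice_filter_upward: "lattice_filter F \<Longrightarrow> x \<in> F \<Longrightarrow> x \<le> y \<Longrightarrow> y \<in> F"
  by (metis lattice_filter_def inf.absorb1)

lemma prime_filter_upward: "prime_filter F \<Longrightarrow> x \<in> F \<Longrightarrow> x \<le> y \<Longrightarrow> y \<in> F"
  unfolding prime_filter_def using lattice_filter_upward by blast

lemma prime_filter_inf_iff: "prime_filter F \<Longrightarrow> x \<sqinter> y \<in> F \<longleftrightarrow> x \<in> F \<and> y \<in> F"
  by (simp add: prime_filter_def lattice_filter_def)

lemma prime_filter_sup_iff: "prime_filter F \<Longrightarrow> x \<squnion> y \<in> F \<longleftrightarrow> x \<in> F \<or> y \<in> F"
  by (simp add: prime_filter_def)

lemma lattice_filter_Union_chain:
  assumes "\<And>F. F \<in> \<C> \<Longrightarrow> lattice_filter F" and "\<forall>F\<in>\<C>. \<forall>G\<in>\<C>. F \<subseteq> G \<or> G \<subseteq> F"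
  shows "lattice_filter (\<Union>\<C>)"
  unfolding lattice_filter_def
proof (intro allI iffI)
  fix x y assume "x \<sqinter> y \<in> \<Union>\<C>"
  then show "x \<in> \<Union>\<C> \<and> y \<in> \<Union>\<C>" using assms(1) by (auto simp: lattice_filter_def)
next
  fix x y assume "x \<in> \<Union>\<C> \<and> y \<in> \<Union>\<C>"
  then obtain F G where "F \<in> \<C>" "G \<in> \<C>" "x \<in> F" "y \<in> G" by blast
  with assms show "x \<sqinter> y \<in> \<Union>\<C>" by (metis UnionI lattice_filter_def subsetD)
qed

lemma lattice_filter_generated:
  assumes "lattice_filter F"
  shows "lattice_filter {z. \<exists>w\<in>F. w \<sqinter> u \<le> z}"
  unfolding lattice_filter_def
proof (intro allI iffI)
  fix x y assume "x \<sqinter> y \<in> {z. \<exists>w\<in>F. w \<sqinter> u \<le> z}"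
  then show "x \<in> {z. \<exists>w\<in>F. w \<sqinter> u \<le> z} \<and> y \<in> {z. \<exists>w\<in>F. w \<sqinter> u \<le> z}"
    by (auto intro: order_trans)
next
  fix x y assume "x \<in> {z. \<exists>w\<in>F. w \<sqinter> u \<le> z} \<and> y \<in> {z. \<exists>w\<in>F. w \<sqinter> u \<le> z}"
  then obtain w1 w2 where w: "w1 \<in> F" "w1 \<sqinter> u \<le> x" "w2 \<in> F" "w2 \<sqinter> u \<le> y" by blast
  have "w1 \<sqinter> w2 \<in> F" using w(1,3) assms by (simp add: lattice_filter_def)
  moreover have "w1 \<sqinter> w2 \<sqinter> u \<le> x \<sqinter> y"
    using w(2,4) by (meson inf_le1 inf_le2 le_inf_iff order_trans)
  ultimately show "x \<sqinter> y \<in> {z. \<exists>w\<in>F. w \<sqinter> u \<le> z}" by blast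
qed

theorem prime_filter_separation:
  fixes x y :: "'a::distrib_lattice"
  assumes "\<not> x \<le> y"
  shows "\<exists>F. prime_filter F \<and> x \<in> F \<and> y \<notin> F"
proof -
  define \<A> where "\<A> = {F. lattice_filter F \<and> x \<in> F \<and> y \<notin> F}"
  have "{z. x \<le> z} \<in> \<A>"
    using assms by (auto simp: \<A>_def lattice_filter_def)
  moreover have "\<Union>\<C> \<in> \<A>" if "\<C> \<noteq> {}" and "subset.chain \<A> \<C>" for \<C>
    using that lattice_filter_Union_chain[of \<C>] by (auto simp: \<A>_def subset_chain_def)
  ultimately obtain M where "M \<in> \<A>" and maximal: "\<forall>G\<in>\<A>. M \<subseteq> G \<longrightarrow> G = M"
    using subset_Zorn_nonempty[of \<A>] by blast
  then have M: "lattice_filter M" "x \<in> M" "y \<notin> M" by (auto simp: \<A>_def)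
  \<comment> \<open>By maximality, adjoining any u \<notin> M to M forces y into the generated filter.\<close>
  have escape: "\<exists>w\<in>M. w \<sqinter> u \<le> y" if "u \<notin> M" for u
  proof (rule ccontr)
    let ?G = "{z. \<exists>w\<in>M. w \<sqinter> u \<le> z}"
    assume "\<not> (\<exists>w\<in>M. w \<sqinter> u \<le> y)"
    then have "?G \<in> \<A>"
      using lattice_filter_generated[OF M(1)] M(2) by (auto simp: \<A>_def intro: le_infI1)
    moreover have "M \<subseteq> ?G" by (auto intro: le_infI1)
    ultimately have "?G = M" using maximal by blast
    moreover have "u \<in> ?G" using M(2) by auto
    ultimately show False using that by simp
  qed
  have prime: "u \<in> M \<or> v \<in> M" if "u \<squnion> v \<in> M" for u v
  proof (rule ccontr)
    assume "\<not> (u \<in> M \<or> v \<in> M)"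
    then obtain w1 w2 where w: "w1 \<in> M" "w1 \<sqinter> u \<le> y" "w2 \<in> M" "w2 \<sqinter> v \<le> y"
      using escape by blast
    then have "w1 \<sqinter> w2 \<sqinter> (u \<squnion> v) \<in> M" using that M(1) by (simp add: lattice_filter_def)
    moreover have "w1 \<sqinter> w2 \<sqinter> (u \<squnion> v) = (w1 \<sqinter> u) \<sqinter> w2 \<squnion> (w2 \<sqinter> v) \<sqinter> w1"
      by (simp add: inf_sup_distrib1 inf.assoc inf.commute inf.left_commute)
    also have "\<dots> \<le> y"
      using w(2,4) by (simp add: le_infI1)
    ultimately show False using M lattice_filter_upward by blast
  qed
  have "prime_filter M"
    using M(1) prime lattice_filter_upward[OF M(1)] by (auto simp: prime_filter_def)
  with M show ?thesis by blast
qed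

lemma le_iff_prime_filters:
  "(x::'a::distrib_lattice) \<le> y \<longleftrightarrow> (\<forall>F. prime_filter F \<longrightarrow> x \<in> F \<longrightarrow> y \<in> F)"
  using prime_filter_separation lattice_filter_upward by (metis prime_filter_def)

lemma eq_iff_prime_filters:
  "(x::'a::distrib_lattice) = y \<longleftrightarrow> (\<forall>F. prime_filter F \<longrightarrow> x \<in> F \<longleftrightarrow> y \<in> F)"
  by (meson antisym le_iff_prime_filters)

lemma boolean_le_iff_proper_prime_filters:
  "(x::'a::boolean_algebra) \<le> y \<longleftrightarrow> (\<forall>F. proper_prime_filter F \<longrightarrow> x \<in> F \<longrightarrow> y \<in> F)"
  unfolding le_iff_prime_filters proper_prime_filter_def
  by (metis prime_filter_def lattice_filter_upward bot_least top_greatest)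

lemma boolean_eq_iff_proper_prime_filters:
  "(x::'a::boolean_algebra) = y \<longleftrightarrow> (\<forall>F. proper_prime_filter F \<longrightarrow> x \<in> F \<longleftrightarrow> y \<in> F)"
  by (meson antisym boolean_le_iff_proper_prime_filters)

lemma proper_prime_filter_compl_iff:
  "proper_prime_filter F \<Longrightarrow> - (x::'a::boolean_algebra) \<in> F \<longleftrightarrow> x \<notin> F"
  unfolding proper_prime_filter_def
  by (metis prime_filter_inf_iff prime_filter_sup_iff inf_compl_bot sup_compl_top)

lemma prime_filter_Sup_fin_iff:
  assumes "prime_filter F"
  shows "finite S \<Longrightarrow> S \<noteq> {} \<Longrightarrow> Sup_fin S \<in> F \<longleftrightarrow> (\<exists>s\<in>S. s \<in> F)"
  by (induction S rule: finite_ne_induct) (simp_all add: prime_filter_sup_iff[OF assms])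

lemma prime_filter_Inf_fin_iff:
  assumes "prime_filter F"
  shows "finite S \<Longrightarrow> S \<noteq> {} \<Longrightarrow> Inf_fin S \<in> F \<longleftrightarrow> (\<forall>s\<in>S. s \<in> F)"
  by (induction S rule: finite_ne_induct) (simp_all add: prime_filter_inf_iff[OF assms])

lemma proper_prime_filter_bjoin_iff:
  "proper_prime_filter F \<Longrightarrow> finite S \<Longrightarrow> bjoin S g \<in> F \<longleftrightarrow> (\<exists>s\<in>S. g s \<in> F)"
  unfolding bjoin_def proper_prime_filter_def by (subst prime_filter_Sup_fin_iff) auto

lemma proper_prime_filter_bmeet_iff:
  "proper_prime_filter F \<Longrightarrow> finite S \<Longrightarrow> bmeet S g \<in> F \<longleftrightarrow> (\<forall>s\<in>S. g s \<in> F)"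
  unfolding bmeet_def proper_prime_filter_def by (subst prime_filter_Inf_fin_iff) auto

lemma prime_filter_vimage:
  assumes "prime_filter U"
    and "\<forall>x y. h (x \<sqinter> y) = h x \<sqinter> h y" and "\<forall>x y. h (x \<squnion> y) = h x \<squnion> h y"
  shows "prime_filter (h -` U)"
  using assms by (simp add: prime_filter_def lattice_filter_def)

lemma lat_poly_mono:
  "lat_poly n p \<Longrightarrow> (\<forall>i\<in>{1..n}. x i \<le> y i) \<Longrightarrow> p x \<le> p y"
  by (induction p rule: lat_poly.induct) (auto intro: le_infI1 le_infI2 le_supI1 le_supI2)

lemma lat_poly_update_inf_le:
  assumes "lat_poly n p" and "z \<le> y"
  shows "p (x(k := y)) \<sqinter> z \<le> p (x(k := z))"
  using assms
proof (induction p rule: lat_poly.induct)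
  case (meet p q)
  have "p (x(k := y)) \<sqinter> q (x(k := y)) \<sqinter> z = (p (x(k := y)) \<sqinter> z) \<sqinter> (q (x(k := y)) \<sqinter> z)"
    by (simp add: inf_aci)
  also have "\<dots> \<le> p (x(k := z)) \<sqinter> q (x(k := z))"
    using meet by (intro inf_mono)
  finally show ?case .
next
  case (join p q)
  have "(p (x(k := y)) \<squnion> q (x(k := y))) \<sqinter> z = p (x(k := y)) \<sqinter> z \<squnion> q (x(k := y)) \<sqinter> z"
    by (rule inf_sup_distrib2)
  also have "\<dots> \<le> p (x(k := z)) \<squnion> q (x(k := z))"
    using join by (intro sup_mono)
  finally show ?case .
qed (auto simp: inf.absorb2)

lemma lat_poly_update_le_sup:
  assumes "lat_poly n p" and "z \<le> y"
  shows "p (x(k := y)) \<le> p (x(k := z)) \<squnion> y"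
  using assms
proof (induction p rule: lat_poly.induct)
  case (meet p q)
  have "p (x(k := y)) \<sqinter> q (x(k := y)) \<le> (p (x(k := z)) \<squnion> y) \<sqinter> (q (x(k := z)) \<squnion> y)"
    using meet by (intro inf_mono)
  also have "\<dots> = p (x(k := z)) \<sqinter> q (x(k := z)) \<squnion> y"
    by (rule sup_inf_distrib2[symmetric])
  finally show ?case .
next
  case (join p q)
  have "p (x(k := y)) \<squnion> q (x(k := y)) \<le> (p (x(k := z)) \<squnion> y) \<squnion> (q (x(k := z)) \<squnion> y)"
    using join by (intro sup_mono)
  also have "\<dots> = p (x(k := z)) \<squnion> q (x(k := z)) \<squnion> y"
    by (simp add: ac_simps)
  finally show ?case .
qed (auto simp: le_supI2)

lemma lat_poly_Sup_fin:
  "finite S \<Longrightarrow> S \<noteq> {} \<Longrightarrow> (\<And>s. s \<in> S \<Longrightarrow> lat_poly n (g s)) \<Longrightarrow>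
    lat_poly n (\<lambda>x. Sup_fin ((\<lambda>s. g s x) ` S))"
  by (induction S rule: finite_ne_induct) (auto intro: lat_poly.join)

lemma lat_poly_Inf_fin:
  "finite I \<Longrightarrow> I \<noteq> {} \<Longrightarrow> I \<subseteq> {1..n} \<Longrightarrow> lat_poly n (\<lambda>x. Inf_fin (x ` I))"
proof (induction I rule: finite_ne_induct)
  case (insert i I)
  then show ?case using lat_poly.meet[OF lat_poly.proj[of i] insert.IH] by simp
qed (simp add: lat_poly.proj)

lemma lat_poly_p0: "lat_poly n (p0 n a b f)"
proof -
  have "lat_poly n (\<lambda>x. if I = {} then f (ehat a b I) else f (ehat a b I) \<sqinter> Inf_fin (x ` I))"
    if "I \<subseteq> {1..n}" for I
    using that finite_subset[OF that] lat_poly.meet[OF lat_poly.const lat_poly_Inf_fin]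
    by (cases "I = {}") (auto intro: lat_poly.const)
  then show ?thesis
    unfolding p0_def[abs_def] by (intro lat_poly_Sup_fin) auto
qed

lemma ehat_mono:
  fixes a b :: "nat \<Rightarrow> 'a::order"
  shows "\<forall>i\<in>{1..n}. a i \<le> b i \<Longrightarrow> I \<subseteq> J \<Longrightarrow> \<forall>i\<in>{1..n}. ehat a b I i \<le> ehat a b J i"
  unfolding ehat_def by auto

lemma ehat_insert: "ehat a b (I \<union> {k}) = (ehat a b I)(k := b k)"
  unfolding ehat_def by auto

lemma ehat_Diff_singleton: "ehat a b (I - {k}) = (ehat a b I)(k := a k)"
  unfolding ehat_def by auto

lemma monotone_on_D_cong:
  assumes "\<And>I. I \<subseteq> {1..n} \<Longrightarrow> g (ehat a b I) = f (ehat a b I)"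
  shows "monotone_on_D n a b g \<longleftrightarrow> monotone_on_D n a b f"
proof -
  have "g (ehat a b I) \<le> g (ehat a b J) \<longleftrightarrow> f (ehat a b I) \<le> f (ehat a b J)"
    if "I \<subseteq> J" "J \<subseteq> {1..n}" for I J
    using that assms[of I] assms[of J] by auto
  then show ?thesis unfolding monotone_on_D_def by blast
qed

lemma star_cond_cong:
  assumes "\<And>I. I \<subseteq> {1..n} \<Longrightarrow> g (ehat a b I) = f (ehat a b I)"
  shows "star_cond n a b g \<longleftrightarrow> star_cond n a b f"
proof -
  have "(g (ehat a b (I \<union> {k})) \<sqinter> a k \<le> g (ehat a b I) \<and> g (ehat a b I) \<le> g (ehat a b (I - {k})) \<squnion> b k)
      \<longleftrightarrow> (f (ehat a b (I \<union> {k})) \<sqinter> a k \<le> f (ehat a b I) \<and> f (ehat a b I) \<le> f (ehat a b (I - {k})) \<squnion> b k)"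
    if "I \<subseteq> {1..n} \<and> k \<in> {1..n}" for I k
  proof -
    have "I \<union> {k} \<subseteq> {1..n}" "I - {k} \<subseteq> {1..n}" using that by auto
    then show ?thesis using that assms by simp
  qed
  then show ?thesis unfolding star_cond_def by blast
qed

lemma lat_poly_monotone_on_D:
  "lat_poly n p \<Longrightarrow> \<forall>i\<in>{1..n}. a i \<le> b i \<Longrightarrow> monotone_on_D n a b p"
  unfolding monotone_on_D_def using lat_poly_mono[OF _ ehat_mono] by blast

lemma lat_poly_star_cond:
  assumes p: "lat_poly n p" and ab: "\<forall>i\<in>{1..n}. a i \<le> b i"
  shows "star_cond n a b p"
  unfolding star_cond_def
proof (intro allI impI conjI)
  fix I k assume Ik: "I \<subseteq> {1..n} \<and> k \<in> {1..n}"
  then have "a k \<le> b k" using ab by blast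
  note lower = lat_poly_update_inf_le[OF p this, of "ehat a b I" k]
    and upper = lat_poly_update_le_sup[OF p this, of "ehat a b I" k]
  have "p (ehat a b (I - {k})) \<le> p (ehat a b I)" "p (ehat a b I) \<le> p (ehat a b (I \<union> {k}))"
    using lat_poly_mono[OF p ehat_mono[OF ab]] by blast+
  then show "p (ehat a b (I \<union> {k})) \<sqinter> a k \<le> p (ehat a b I)"
    and "p (ehat a b I) \<le> p (ehat a b (I - {k})) \<squnion> b k"
    using lower upper unfolding ehat_insert ehat_Diff_singleton by (auto intro: order_trans)
qed

lemma interpolating_lat_poly_necessary:
  assumes p: "lat_poly n p" and ab: "\<forall>i\<in>{1..n}. a i \<le> b i"
    and agree: "\<forall>I\<subseteq>{1..n}. p (ehat a b I) = f (ehat a b I)"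
  shows "monotone_on_D n a b f \<and> star_cond n a b f"
proof -
  from agree have agree': "\<And>I. I \<subseteq> {1..n} \<Longrightarrow> p (ehat a b I) = f (ehat a b I)" by blast
  show ?thesis
    using lat_poly_monotone_on_D[OF p ab] lat_poly_star_cond[OF p ab]
      monotone_on_D_cong[of n p a b f, OF agree'] star_cond_cong[of n p a b f, OF agree'] by blast
qed

text \<open>The image of the data under a prime filter U: \<open>A i\<close>, \<open>B i\<close>, \<open>F I\<close> stand for
  \<open>a i \<in> U\<close>, \<open>b i \<in> U\<close>, \<open>f (ehat a b I) \<in> U\<close>, and the axioms are what monotonicity
  and (\<star>) become. Then \<open>ehat_truth J\<close> is the image of \<open>ehat a b J\<close> and \<open>support J\<close> its
  set of true coordinates.\<close>
locale two_valued_star =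
  fixes N :: "'i set" and A B :: "'i \<Rightarrow> bool" and F :: "'i set \<Rightarrow> bool"
  assumes finite_N: "finite N"
    and A_imp_B: "i \<in> N \<Longrightarrow> A i \<Longrightarrow> B i"
    and F_mono: "I \<subseteq> J \<Longrightarrow> J \<subseteq> N \<Longrightarrow> F I \<Longrightarrow> F J"
    and F_star_lower: "I \<subseteq> N \<Longrightarrow> k \<in> N \<Longrightarrow> F (I \<union> {k}) \<Longrightarrow> A k \<Longrightarrow> F I"
    and F_star_upper: "I \<subseteq> N \<Longrightarrow> k \<in> N \<Longrightarrow> F I \<Longrightarrow> \<not> B k \<Longrightarrow> F (I - {k})"
begin

definition ehat_truth :: "'i set \<Rightarrow> 'i \<Rightarrow> bool" where
  "ehat_truth J i \<longleftrightarrow> (if i \<in> J then B i else A i)"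

definition switching :: "'i set" where
  "switching = {i. B i \<and> \<not> A i}"

definition support :: "'i set \<Rightarrow> 'i set" where
  "support J = {i \<in> N. ehat_truth J i}"

lemma support_subset_N: "support J \<subseteq> N"
  by (simp add: support_def)

lemma F_Diff_singleton:
  assumes "J \<subseteq> N" "k \<in> N" "k \<notin> switching" "F J"
  shows "F (J - {k})"
proof (cases "A k")
  case True
  have "F ((J - {k}) \<union> {k})"
    using assms(1,2,4) F_mono[of J "(J - {k}) \<union> {k}"] by auto
  with True assms(1,2) show ?thesis using F_star_lower[of "J - {k}" k] by blast
next
  case False
  with assms show ?thesis
    using F_star_upper by (simp add: switching_def)
qed

lemma F_Diff:
  assumes "finite S" "S \<subseteq> N - switching" "J \<subseteq> N" "F J"
  shows "F (J - S)"
  using assms(1,2)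
proof (induction S rule: finite_induct)
  case (insert k S)
  have "F (J - S - {k})"
    by (rule F_Diff_singleton) (use insert assms(3,4) in auto)
  moreover have "J - insert k S = J - S - {k}" by blast
  ultimately show ?case by simp
next
  case empty
  from assms(4) show ?case by simp
qed

lemma F_restrict_switching:
  assumes "J \<subseteq> N"
  shows "F J \<longleftrightarrow> F (J \<inter> switching)"
proof
  assume "F J"
  have "finite (J - switching)"
    using assms finite_N by (meson Diff_subset finite_subset subset_trans)
  moreover have "J - switching \<subseteq> N - switching" using assms by blast
  ultimately have "F (J - (J - switching))"
    using F_Diff[of "J - switching" J] assms \<open>F J\<close> by blast
  moreover have "J - (J - switching) = J \<inter> switching" by blast
  ultimately show "F (J \<inter> switching)" by simp
next
  assume "F (J \<inter> switching)"
  then show "F J" using F_mono[of "J \<inter> switching" J] assms by blast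
qed

lemma F_support:
  assumes "J \<subseteq> N"
  shows "F (support J) \<longleftrightarrow> F J"
proof -
  have "support J \<inter> switching = J \<inter> switching"
    using assms by (auto simp: support_def ehat_truth_def switching_def)
  then show ?thesis
    using F_restrict_switching[OF assms] F_restrict_switching[OF support_subset_N[of J]] by argo
qed

lemma monotone_dnf_eval:
  assumes C_mono: "\<And>I J. I \<subseteq> J \<Longrightarrow> J \<subseteq> N \<Longrightarrow> C I \<Longrightarrow> C J"
  shows "(\<exists>I\<subseteq>N. C I \<and> (\<forall>i\<in>I. ehat_truth J i)) \<longleftrightarrow> C (support J)"
proof
  assume "\<exists>I\<subseteq>N. C I \<and> (\<forall>i\<in>I. ehat_truth J i)"
  then obtain I where "I \<subseteq> N" "C I" "\<forall>i\<in>I. ehat_truth J i" by blast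
  then have "I \<subseteq> support J" by (auto simp: support_def)
  then show "C (support J)" using C_mono[OF _ support_subset_N \<open>C I\<close>] by blast
next
  assume "C (support J)"
  then show "\<exists>I\<subseteq>N. C I \<and> (\<forall>i\<in>I. ehat_truth J i)"
    using support_subset_N by (intro exI[of _ "support J"]) (simp add: support_def)
qed

lemma F_dnf_eval: "J \<subseteq> N \<Longrightarrow> (\<exists>I\<subseteq>N. F I \<and> (\<forall>i\<in>I. ehat_truth J i)) \<longleftrightarrow> F J"
  using monotone_dnf_eval[where C = F, OF F_mono] F_support by simp

lemma support_subset: "\<forall>i\<in>N - I. \<not> A i \<Longrightarrow> support I \<subseteq> I"
  by (auto simp: support_def ehat_truth_def)

lemma subset_support: "I \<subseteq> N \<Longrightarrow> \<forall>i\<in>I. B i \<Longrightarrow> I \<subseteq> support I"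
  by (auto simp: support_def ehat_truth_def)

text \<open>The supports are exactly the sets I with \<open>\<not> A\<close> off I and B on I; on them both
  bounds say that C and F agree.\<close>
lemma dnf_represents_iff:
  assumes C_mono: "\<And>I J. I \<subseteq> J \<Longrightarrow> J \<subseteq> N \<Longrightarrow> C I \<Longrightarrow> C J"
  shows "(\<forall>J\<subseteq>N. (\<exists>I\<subseteq>N. C I \<and> (\<forall>i\<in>I. ehat_truth J i)) \<longleftrightarrow> F J) \<longleftrightarrow>
    (\<forall>I\<subseteq>N. (F I \<and> (\<forall>i\<in>N - I. \<not> A i) \<longrightarrow> C I) \<and> (C I \<longrightarrow> F I \<or> (\<exists>i\<in>I. \<not> B i)))"
    (is "_ \<longleftrightarrow> (\<forall>I\<subseteq>N. ?bounds I)")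
proof -
  have "(\<forall>J\<subseteq>N. C (support J) \<longleftrightarrow> F J) \<longleftrightarrow> (\<forall>I\<subseteq>N. ?bounds I)"
  proof (rule iffI; intro allI impI)
    fix I assume agree: "\<forall>J\<subseteq>N. C (support J) \<longleftrightarrow> F J" and I: "I \<subseteq> N"
    then have CF: "C (support I) \<longleftrightarrow> F I" by blast
    have "C I" if "F I" "\<forall>i\<in>N - I. \<not> A i"
      using that CF C_mono[OF support_subset[of I] I] by blast
    moreover have "F I" if "C I" "\<forall>i\<in>I. B i"
      using that CF C_mono[OF subset_support[OF I] support_subset_N] by blast
    ultimately show "?bounds I" by blast
  next
    fix J assume bounds: "\<forall>I\<subseteq>N. ?bounds I" and J: "J \<subseteq> N"
    have "?bounds (support J)" using bounds support_subset_N by blast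
    moreover have "\<forall>i\<in>N - support J. \<not> A i" "\<forall>i\<in>support J. B i"
      using A_imp_B by (auto simp: support_def ehat_truth_def)
    ultimately show "C (support J) \<longleftrightarrow> F J"
      using F_support[OF J] by blast
  qed
  then show ?thesis by (simp only: monotone_dnf_eval[OF C_mono])
qed

end

lemma two_valued_star_prime_filter:
  fixes a b :: "nat \<Rightarrow> 'a::distrib_lattice"
  assumes V: "prime_filter V" and ab: "\<forall>i\<in>{1..n}. a i \<le> b i"
    and mono: "monotone_on_D n a b f" and star: "star_cond n a b f"
  shows "two_valued_star {1..n} (\<lambda>i. a i \<in> V) (\<lambda>i. b i \<in> V) (\<lambda>I. f (ehat a b I) \<in> V)"
proof
  show "finite {1..n}" by simp
next
  fix i assume "i \<in> {1..n}" "a i \<in> V"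
  then show "b i \<in> V" using ab prime_filter_upward[OF V] by blast
next
  fix I J assume "I \<subseteq> J" "J \<subseteq> {1..n}" "f (ehat a b I) \<in> V"
  then show "f (ehat a b J) \<in> V"
    using mono prime_filter_upward[OF V] unfolding monotone_on_D_def by blast
next
  fix I k assume Ik: "I \<subseteq> {1..n}" "k \<in> {1..n}" and "f (ehat a b (I \<union> {k})) \<in> V" "a k \<in> V"
  then have "f (ehat a b (I \<union> {k})) \<sqinter> a k \<in> V" by (simp add: prime_filter_inf_iff[OF V])
  then show "f (ehat a b I) \<in> V"
    using star Ik prime_filter_upward[OF V] unfolding star_cond_def by blast
next
  fix I k assume Ik: "I \<subseteq> {1..n}" "k \<in> {1..n}" and "f (ehat a b I) \<in> V" "b k \<notin> V"
  moreover have "f (ehat a b (I - {k})) \<squnion> b k \<in> V"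
    using star Ik \<open>f (ehat a b I) \<in> V\<close> prime_filter_upward[OF V] unfolding star_cond_def by blast
  ultimately show "f (ehat a b (I - {k})) \<in> V" by (simp add: prime_filter_sup_iff[OF V])
qed

lemma ehat_mem_iff: "ehat a b J i \<in> V \<longleftrightarrow> (if i \<in> J then b i \<in> V else a i \<in> V)"
  by (simp add: ehat_def)

lemma p0_mem_prime_filter:
  assumes U: "prime_filter U"
  shows "p0 n a b f x \<in> U \<longleftrightarrow> (\<exists>I\<subseteq>{1..n}. f (ehat a b I) \<in> U \<and> (\<forall>i\<in>I. x i \<in> U))"
proof -
  define t where "t I = (if I = {} then f (ehat a b I) else f (ehat a b I) \<sqinter> Inf_fin (x ` I))" for I
  have "t I \<in> U \<longleftrightarrow> f (ehat a b I) \<in> U \<and> (\<forall>i\<in>I. x i \<in> U)" if "I \<subseteq> {1..n}" for I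
    using finite_subset[OF that]
    by (simp add: t_def prime_filter_inf_iff[OF U] prime_filter_Inf_fin_iff[OF U])
  moreover have "p0 n a b f x \<in> U \<longleftrightarrow> (\<exists>I\<in>Pow {1..n}. t I \<in> U)"
    unfolding p0_def t_def[symmetric] by (subst prime_filter_Sup_fin_iff[OF U]) auto
  ultimately show ?thesis by blast
qed

theorem p0_interpolates:
  fixes a b :: "nat \<Rightarrow> 'a::distrib_lattice"
  assumes ab: "\<forall>i\<in>{1..n}. a i \<le> b i"
    and mono: "monotone_on_D n a b f" and star: "star_cond n a b f" and J: "J \<subseteq> {1..n}"
  shows "p0 n a b f (ehat a b J) = f (ehat a b J)"
proof (rule eq_iff_prime_filters[THEN iffD2], intro allI impI)
  fix U :: "'a set" assume U: "prime_filter U"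
  interpret two_valued_star "{1..n}" "\<lambda>i. a i \<in> U" "\<lambda>i. b i \<in> U" "\<lambda>I. f (ehat a b I) \<in> U"
    by (rule two_valued_star_prime_filter[OF U ab mono star])
  have "p0 n a b f (ehat a b J) \<in> U \<longleftrightarrow> (\<exists>I\<subseteq>{1..n}. f (ehat a b I) \<in> U \<and> (\<forall>i\<in>I. ehat_truth J i))"
    unfolding p0_mem_prime_filter[OF U] ehat_truth_def ehat_mem_iff ..
  also have "\<dots> \<longleftrightarrow> f (ehat a b J) \<in> U"
    by (rule F_dnf_eval[OF J])
  finally show "p0 n a b f (ehat a b J) \<in> U \<longleftrightarrow> f (ehat a b J) \<in> U" .
qed

lemma dnf_mem_proper_prime_filter:
  assumes dnf: "dnf_coeffs n h p c" and U: "proper_prime_filter U"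
  shows "h (p x) \<in> U \<longleftrightarrow> (\<exists>I\<subseteq>{1..n}. c I \<in> U \<and> (\<forall>i\<in>I. h (x i) \<in> U))"
proof -
  have "h (p x) = bjoin (Pow {1..n}) (\<lambda>I. c I \<sqinter> bmeet I (\<lambda>i. h (x i)))"
    using dnf by (simp add: dnf_coeffs_def)
  moreover have "c I \<sqinter> bmeet I (\<lambda>i. h (x i)) \<in> U \<longleftrightarrow> c I \<in> U \<and> (\<forall>i\<in>I. h (x i) \<in> U)"
    if "I \<subseteq> {1..n}" for I
  proof -
    have "prime_filter U" using U by (simp add: proper_prime_filter_def)
    then show ?thesis
      using finite_subset[OF that] by (simp add: prime_filter_inf_iff proper_prime_filter_bmeet_iff[OF U])
  qed
  ultimately show ?thesis
    by (simp add: proper_prime_filter_bjoin_iff[OF U] Bex_def)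
qed

lemma c_minus_mem_iff:
  assumes U: "proper_prime_filter U"
  shows "c_minus n h a b f I \<in> U \<longleftrightarrow> h (f (ehat a b I)) \<in> U \<and> (\<forall>i\<in>{1..n} - I. h (a i) \<notin> U)"
  using U unfolding c_minus_def proper_prime_filter_def
  by (simp add: prime_filter_inf_iff proper_prime_filter_bmeet_iff[OF U]
      proper_prime_filter_compl_iff[OF U])

lemma c_plus_mem_iff:
  assumes U: "proper_prime_filter U" and "finite I"
  shows "c_plus h a b f I \<in> U \<longleftrightarrow> h (f (ehat a b I)) \<in> U \<or> (\<exists>i\<in>I. h (b i) \<notin> U)"
  using U unfolding c_plus_def proper_prime_filter_def
  by (simp add: prime_filter_sup_iff proper_prime_filter_bjoin_iff[OF U \<open>finite I\<close>]
      proper_prime_filter_compl_iff[OF U])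

lemma dnf_interpolates_iff_proper_prime_filter:
  fixes a b :: "nat \<Rightarrow> 'a::distrib_lattice" and h :: "'a \<Rightarrow> 'b::boolean_algebra"
  assumes ab: "\<forall>i\<in>{1..n}. a i \<le> b i"
    and mono: "monotone_on_D n a b f" and star: "star_cond n a b f"
    and hom_inf: "\<forall>x y. h (x \<sqinter> y) = h x \<sqinter> h y" and hom_sup: "\<forall>x y. h (x \<squnion> y) = h x \<squnion> h y"
    and dnf: "dnf_coeffs n h p c" and U: "proper_prime_filter U"
  shows "(\<forall>J\<subseteq>{1..n}. h (p (ehat a b J)) \<in> U \<longleftrightarrow> h (f (ehat a b J)) \<in> U) \<longleftrightarrow>
    (\<forall>I\<subseteq>{1..n}. (c_minus n h a b f I \<in> U \<longrightarrow> c I \<in> U) \<and> (c I \<in> U \<longrightarrow> c_plus h a b f I \<in> U))"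
proof -
  have "prime_filter (h -` U)"
    using U hom_inf hom_sup by (simp add: proper_prime_filter_def prime_filter_vimage)
  then interpret two_valued_star "{1..n}" "\<lambda>i. a i \<in> h -` U" "\<lambda>i. b i \<in> h -` U"
      "\<lambda>I. f (ehat a b I) \<in> h -` U"
    by (rule two_valued_star_prime_filter[OF _ ab mono star])
  have c_mono: "c J \<in> U" if "I \<subseteq> J" "J \<subseteq> {1..n}" "c I \<in> U" for I J
  proof -
    have "c I \<le> c J" using dnf that(1,2) unfolding dnf_coeffs_def by blast
    with U \<open>c I \<in> U\<close> show ?thesis
      unfolding proper_prime_filter_def using prime_filter_upward by blast
  qed
  have "(\<forall>J\<subseteq>{1..n}. h (p (ehat a b J)) \<in> U \<longleftrightarrow> h (f (ehat a b J)) \<in> U) \<longleftrightarrow>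
      (\<forall>J\<subseteq>{1..n}. (\<exists>I\<subseteq>{1..n}. c I \<in> U \<and> (\<forall>i\<in>I. ehat_truth J i)) \<longleftrightarrow> f (ehat a b J) \<in> h -` U)"
    unfolding ehat_truth_def by (simp add: dnf_mem_proper_prime_filter[OF dnf U] ehat_def)
  also have "\<dots> \<longleftrightarrow> (\<forall>I\<subseteq>{1..n}. (f (ehat a b I) \<in> h -` U \<and> (\<forall>i\<in>{1..n} - I. a i \<notin> h -` U) \<longrightarrow> c I \<in> U)
      \<and> (c I \<in> U \<longrightarrow> f (ehat a b I) \<in> h -` U \<or> (\<exists>i\<in>I. b i \<notin> h -` U)))"
    by (rule dnf_represents_iff) (rule c_mono)
  also have "\<dots> \<longleftrightarrow>
      (\<forall>I\<subseteq>{1..n}. (c_minus n h a b f I \<in> U \<longrightarrow> c I \<in> U) \<and> (c I \<in> U \<longrightarrow> c_plus h a b f I \<in> U))"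
  proof -
    have "c_plus h a b f I \<in> U \<longleftrightarrow> h (f (ehat a b I)) \<in> U \<or> (\<exists>i\<in>I. h (b i) \<notin> U)"
      if "I \<subseteq> {1..n}" for I
      using c_plus_mem_iff[OF U finite_subset[OF that finite_atLeastAtMost]] .
    then show ?thesis by (simp add: c_minus_mem_iff[OF U])
  qed
  finally show ?thesis .
qed

theorem dnf_interpolates_iff_coeff_bounds:
  fixes a b :: "nat \<Rightarrow> 'a::distrib_lattice" and h :: "'a \<Rightarrow> 'b::boolean_algebra"
  assumes ab: "\<forall>i\<in>{1..n}. a i \<le> b i"
    and mono: "monotone_on_D n a b f" and star: "star_cond n a b f"
    and h: "bool_envelope h" and dnf: "dnf_coeffs n h p c"
  shows "(\<forall>I\<subseteq>{1..n}. p (ehat a b I) = f (ehat a b I)) \<longleftrightarrow>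
    (\<forall>I\<subseteq>{1..n}. c_minus n h a b f I \<le> c I \<and> c I \<le> c_plus h a b f I)"
proof -
  from h have "inj h" and hom_inf: "\<forall>x y. h (x \<sqinter> y) = h x \<sqinter> h y"
    and hom_sup: "\<forall>x y. h (x \<squnion> y) = h x \<squnion> h y"
    unfolding bool_envelope_def by blast+
  note per_filter = dnf_interpolates_iff_proper_prime_filter[OF ab mono star hom_inf hom_sup dnf]
  have "(\<forall>I\<subseteq>{1..n}. p (ehat a b I) = f (ehat a b I)) \<longleftrightarrow>
      (\<forall>I\<subseteq>{1..n}. h (p (ehat a b I)) = h (f (ehat a b I)))"
    using \<open>inj h\<close> by (auto dest: injD)
  also have "\<dots> \<longleftrightarrow> (\<forall>U. proper_prime_filter U \<longrightarrow>
      (\<forall>I\<subseteq>{1..n}. h (p (ehat a b I)) \<in> U \<longleftrightarrow> h (f (ehat a b I)) \<in> U))"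
  proof -
    have "h (p (ehat a b I)) = h (f (ehat a b I)) \<longleftrightarrow>
        (\<forall>U. proper_prime_filter U \<longrightarrow> h (p (ehat a b I)) \<in> U \<longleftrightarrow> h (f (ehat a b I)) \<in> U)" for I
      by (rule boolean_eq_iff_proper_prime_filters)
    then show ?thesis by (simp only:) blast
  qed
  also have "\<dots> \<longleftrightarrow> (\<forall>U. proper_prime_filter U \<longrightarrow>
      (\<forall>I\<subseteq>{1..n}. (c_minus n h a b f I \<in> U \<longrightarrow> c I \<in> U) \<and> (c I \<in> U \<longrightarrow> c_plus h a b f I \<in> U)))"
    by (rule all_cong) (rule per_filter)
  also have "\<dots> \<longleftrightarrow> (\<forall>I\<subseteq>{1..n}. c_minus n h a b f I \<le> c I \<and> c I \<le> c_plus h a b f I)"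
  proof -
    have "c_minus n h a b f I \<le> c I \<longleftrightarrow>
        (\<forall>U. proper_prime_filter U \<longrightarrow> c_minus n h a b f I \<in> U \<longrightarrow> c I \<in> U)"
      "c I \<le> c_plus h a b f I \<longleftrightarrow>
        (\<forall>U. proper_prime_filter U \<longrightarrow> c I \<in> U \<longrightarrow> c_plus h a b f I \<in> U)" for I
      by (rule boolean_le_iff_proper_prime_filters)+
    then show ?thesis by (simp only:) blast
  qed
  finally show ?thesis .
qed

theorem theorem3p6:
  fixes n :: nat and a b :: "nat \<Rightarrow> 'a::distrib_lattice" and f :: "(nat \<Rightarrow> 'a) \<Rightarrow> 'a"
  assumes "n \<ge> 1" and "\<forall>i\<in>{1..n}. a i < b i"
  shows "((\<exists>p. lat_poly n p \<and> (\<forall>I. I \<subseteq> {1..n} \<longrightarrow> p (ehat a b I) = f (ehat a b I)))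
           \<longleftrightarrow> monotone_on_D n a b f \<and> star_cond n a b f)
       \<and> (monotone_on_D n a b f \<and> star_cond n a b f \<longrightarrow>
         (\<forall>h. bool_envelope (h :: 'a \<Rightarrow> 'b::boolean_algebra) \<longrightarrow>
           (\<forall>p c. lat_poly n p \<and> dnf_coeffs n h p c \<longrightarrow>
              ((\<forall>I. I \<subseteq> {1..n} \<longrightarrow> p (ehat a b I) = f (ehat a b I)) \<longleftrightarrow>
               (\<forall>I. I \<subseteq> {1..n} \<longrightarrow> c_minus n h a b f I \<le> c I \<and> c I \<le> c_plus h a b f I)))))
       \<and> (monotone_on_D n a b f \<and> star_cond n a b f \<longrightarrow>
         lat_poly n (p0 n a b f) \<and>
         (\<forall>I. I \<subseteq> {1..n} \<longrightarrow> p0 n a b f (ehat a b I) = f (ehat a b I)))"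
proof -
  have ab: "\<forall>i\<in>{1..n}. a i \<le> b i" using assms(2) by (simp add: less_imp_le)
  have existence: "(\<exists>p. lat_poly n p \<and> (\<forall>I. I \<subseteq> {1..n} \<longrightarrow> p (ehat a b I) = f (ehat a b I)))
      \<longleftrightarrow> monotone_on_D n a b f \<and> star_cond n a b f"
    using interpolating_lat_poly_necessary[OF _ ab] lat_poly_p0 p0_interpolates[OF ab] by blast
  show ?thesis
    by (intro conjI impI allI existence lat_poly_p0 p0_interpolates[OF ab]
        dnf_interpolates_iff_coeff_bounds[OF ab]) auto
qed

end
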